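(* Let $N$ be a finite set and $\mathcal{F} \subseteq 2^N$ a set family. If $\mathcal{F}$ satisfies (B$^\natural$-EXC$_{\rm m}$), then $\mathcal{F}$ satisfies (B$^\natural$-EXC).
   Context: Notation: $X - i = X \setminus \{i\}$, $Y + i = Y \cup \{i\}$, $X - i + j = (X\setminus\{i\})\cup\{j\}$, $Y + i - j = (Y \cup\{i\})\setminus\{j\}$. (B$^\natural$-EXC): for any $X, Y \in \mathcal{F}$ and $i \in X\setminus Y$, either (i) $X - i \in \mathcal{F}$ and $Y + i \in \mathcal{F}$, or (ii) there exists $j \in Y\setminus X$ with $X - i + j \in \mathcal{F}$ and $Y + i - j \in \mathcal{F}$. (B$^\natural$-EXC$_{\rm m}$): for any $X, Y \in \mathcal{F}$ and $I \subseteq X\setminus Y$ there exists $J \subseteq Y\setminus X$ with $(X\setminus I)\cup J \in \mathcal{F}$ and $(Y\setminus J)\cup I \in \mathcal{F}$. *)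

theory Defs
  imports Main
begin

definition bnat_exc :: "'a set set \<Rightarrow> bool" where
  "bnat_exc F \<longleftrightarrow>
     (\<forall>X\<in>F. \<forall>Y\<in>F. \<forall>i\<in>X - Y.
        (X - {i} \<in> F \<and> insert i Y \<in> F) \<or>
        (\<exists>j\<in>Y - X. insert j (X - {i}) \<in> F \<and> (insert i Y) - {j} \<in> F))"

definition bnat_exc_m :: "'a set set \<Rightarrow> bool" where
  "bnat_exc_m F \<longleftrightarrow>
     (\<forall>X\<in>F. \<forall>Y\<in>F. \<forall>I. I \<subseteq> X - Y \<longrightarrow>
        (\<exists>J. J \<subseteq> Y - X \<and> (X - I) \<union> J \<in> F \<and> (Y - J) \<union> I \<in> F))"

end

theory Submission imports Defs begin

text \<open>
  Induction on \<open>|X \<triangle> Y|\<close>: every pair of sets in \<open>\<F>\<close> with a smaller symmetric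
  difference satisfies the exchange. If \<open>X - Y\<close> contains some \<open>e \<noteq> i\<close>, (B\<open>\<^sup>\<natural>\<close>-EXC\<open>\<^sub>m\<close>)
  with \<open>I = {i}\<close> gives \<open>J \<subseteq> Y - X\<close> with \<open>X - i \<union> J, Y + i - J \<in> \<F>\<close>. The pairs
  \<open>(X, X - i \<union> J)\<close> and \<open>(Y + i - J, Y)\<close> miss \<open>e\<close> in their symmetric difference, and so
  do all pairs obtained from them by further exchanges; combining these exchanges gives
  the one for \<open>(X, Y, i)\<close>, possibly after reducing \<open>J\<close> to two elements. If \<open>X - Y = {i}\<close>,
  (B\<open>\<^sup>\<natural>\<close>-EXC\<open>\<^sub>m\<close>) applied to \<open>(Y, X)\<close> with \<open>I = {u}\<close>, \<open>u \<in> Y - X\<close>, returns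
  \<open>K \<subseteq> {i}\<close>: \<open>K = {i}\<close> is the required exchange, and \<open>K = {}\<close> gives \<open>Y - u, X + u \<in> \<F>\<close>;
  the exchanges of \<open>i\<close> in \<open>(X, Y - u)\<close> and \<open>(X + u, Y)\<close>, available by induction,
  combine to the required one.
\<close>

definition exchangeable :: "'a set set \<Rightarrow> 'a set \<Rightarrow> 'a set \<Rightarrow> 'a \<Rightarrow> bool" where
  "exchangeable F X Y i \<longleftrightarrow> (X - {i} \<in> F \<and> insert i Y \<in> F) \<or>
     (\<exists>j\<in>Y - X. insert j (X - {i}) \<in> F \<and> (insert i Y) - {j} \<in> F)"

lemma bnat_exc_iff_exchangeable:
  "bnat_exc F \<longleftrightarrow> (\<forall>X\<in>F. \<forall>Y\<in>F. \<forall>i\<in>X - Y. exchangeable F X Y i)"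
  unfolding bnat_exc_def exchangeable_def ..

text \<open>The two elimination rules below take the resulting sets as parameters, so that
  they can be applied with \<open>rule\<close> and the set identities left to \<open>auto\<close>.\<close>

lemma exchangeable_subsetD:
  assumes "exchangeable F A B a" "B \<subseteq> A" "A - {a} = P" "insert a B = Q"
  shows "P \<in> F \<and> Q \<in> F"
  using assms unfolding exchangeable_def by auto

lemma exchangeable_singleD:
  assumes "exchangeable F A B a" "B - A = {y}" "A - {a} = P1" "insert a B = Q1"
    "insert y (A - {a}) = P2" "insert a B - {y} = Q2"
  shows "(P1 \<in> F \<and> Q1 \<in> F) \<or> (P2 \<in> F \<and> Q2 \<in> F)"
  using assms unfolding exchangeable_def by auto

lemma bnat_exc_mE:
  assumes "bnat_exc_m F" "X \<in> F" "Y \<in> F" "I \<subseteq> X - Y"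
  obtains J where "J \<subseteq> Y - X" "(X - I) \<union> J \<in> F" "(Y - J) \<union> I \<in> F"
  using assms(1)[unfolded bnat_exc_m_def, rule_format, OF assms(2-4)] that by blast

context
  fixes F :: "'a set set" and X Y :: "'a set" and i :: 'a
  assumes XF: "X \<in> F" and YF: "Y \<in> F" and iX: "i \<in> X" and iY: "i \<notin> Y"
    and smaller_exchangeable: "\<And>A B a. A \<in> F \<Longrightarrow> B \<in> F \<Longrightarrow> a \<in> A \<Longrightarrow> a \<notin> B \<Longrightarrow>
      sym_diff A B \<subset> sym_diff X Y \<Longrightarrow> exchangeable F A B a"
begin

lemma exchange_by_removal: "X - {i} \<in> F \<Longrightarrow> insert i Y \<in> F \<Longrightarrow> exchangeable F X Y i"
  unfolding exchangeable_def by auto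

lemma exchange_by_swap:
  "j \<in> Y \<Longrightarrow> j \<notin> X \<Longrightarrow> insert j (X - {i}) \<in> F \<Longrightarrow> insert i Y - {j} \<in> F \<Longrightarrow> exchangeable F X Y i"
  unfolding exchangeable_def by auto

lemma exchangeable_avoiding:
  assumes "A \<in> F" "B \<in> F" "a \<in> A" "a \<notin> B" "sym_diff A B \<subseteq> sym_diff X Y"
    and "e \<in> sym_diff X Y" "e \<notin> sym_diff A B"
  shows "exchangeable F A B a"
proof (rule smaller_exchangeable)
  show "sym_diff A B \<subset> sym_diff X Y"
    by (intro psubsetI) (use assms(5-7) in blast)+
qed (use assms in auto)

lemma exchangeable_within_diff:
  assumes "A \<in> F" "B \<in> F" "a \<in> A" "a \<notin> B" "sym_diff A B \<subseteq> Y - X"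
  shows "exchangeable F A B a"
  using assms iX iY by (intro exchangeable_avoiding[where e=i]) auto

lemma exchange_from_transfer:
  assumes jY: "j \<in> Y" and jX: "j \<notin> X" and Yj: "Y - {j} \<in> F" and Xj: "insert j X \<in> F"
  shows "exchangeable F X Y i"
proof -
  have e1: "exchangeable F X (Y - {j}) i"
    by (rule exchangeable_avoiding[where e=j]) (use XF Yj iX iY jY jX in auto)
  have e2: "exchangeable F (insert j X) Y i"
    by (rule exchangeable_avoiding[where e=j]) (use YF Xj iX iY jY jX in auto)
  have q1: "insert i (Y - {j}) = insert i Y - {j}" "Y - {j} - X = Y - X - {j}"
    "insert j X - {i} = insert j (X - {i})" "Y - insert j X = Y - X - {j}"
    using iX jX by auto
  from e1 have c1: "(X - {i} \<in> F \<and> insert i Y - {j} \<in> F) \<or>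
      (\<exists>k\<in>Y - X - {j}. insert k (X - {i}) \<in> F \<and> insert i Y - {j} - {k} \<in> F)"
    unfolding exchangeable_def q1 .
  from e2 have c2: "(insert j (X - {i}) \<in> F \<and> insert i Y \<in> F) \<or>
      (\<exists>l\<in>Y - X - {j}. insert l (insert j (X - {i})) \<in> F \<and> insert i Y - {l} \<in> F)"
    unfolding exchangeable_def q1 .
  show ?thesis
  proof (cases "X - {i} \<in> F \<and> insert i Y - {j} \<in> F")
    case removal: True
    show ?thesis
    proof (cases "insert j (X - {i}) \<in> F \<and> insert i Y \<in> F")
      case True then show ?thesis using removal exchange_by_removal by blast
    next
      case False
      then obtain l where l: "l \<in> Y" "l \<notin> X" "l \<noteq> j" "insert l (insert j (X - {i})) \<in> F" "insert i Y - {l} \<in> F"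
        using c2 by auto
      have "exchangeable F (insert l (insert j (X - {i}))) (X - {i}) l"
        by (rule exchangeable_within_diff) (use l removal iX iY jY jX in auto)
      then have "insert j (X - {i}) \<in> F \<and> insert l (X - {i}) \<in> F"
        by (rule exchangeable_subsetD) (use l jX in auto)
      then show ?thesis using l exchange_by_swap by auto
    qed
  next
    case False
    then obtain k where k: "k \<in> Y" "k \<notin> X" "k \<noteq> j" "insert k (X - {i}) \<in> F" "insert i Y - {j} - {k} \<in> F"
      using c1 by auto
    show ?thesis
    proof (cases "insert j (X - {i}) \<in> F \<and> insert i Y \<in> F")
      case removal: True
      have "exchangeable F (insert i Y) (insert i Y - {j} - {k}) k"
        by (rule exchangeable_within_diff) (use k removal iX iY jY jX in auto)
      then have "insert i Y - {k} \<in> F \<and> insert i Y - {j} \<in> F"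
        by (rule exchangeable_subsetD) (use k jY in auto)
      then show ?thesis using k exchange_by_swap by auto
    next
      case False
      then obtain l where l: "l \<in> Y" "l \<notin> X" "l \<noteq> j" "insert l (insert j (X - {i})) \<in> F" "insert i Y - {l} \<in> F"
        using c2 by auto
      show ?thesis
      proof (cases "k = l")
        case True then show ?thesis using k l exchange_by_swap by auto
      next
        case kl: False
        have "exchangeable F (insert i Y - {l}) (insert i Y - {j} - {k}) k"
          by (rule exchangeable_within_diff) (use k l kl iX iY jY jX in auto)
        then have y: "(insert i Y - {l} - {k} \<in> F \<and> insert i Y - {j} \<in> F) \<or>
                   (insert i Y - {k} \<in> F \<and> insert i Y - {j} - {l} \<in> F)"
          by (rule exchangeable_singleD) (use k l kl iX iY jY jX in auto)
        have "exchangeable F (insert l (insert j (X - {i}))) (insert k (X - {i})) l"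
          by (rule exchangeable_within_diff) (use k l kl iX iY jY jX in auto)
        then have x: "(insert j (X - {i}) \<in> F \<and> insert l (insert k (X - {i})) \<in> F) \<or>
                   (insert k (insert j (X - {i})) \<in> F \<and> insert l (X - {i}) \<in> F)"
          by (rule exchangeable_singleD) (use k l kl iX iY jY jX in auto)
        show ?thesis using x y k l jY jX exchange_by_swap by blast
      qed
    qed
  qed
qed

lemma exchange_from_insertions:
  assumes aY: "\<alpha> \<in> Y" "\<alpha> \<notin> X" and bY: "\<beta> \<in> Y" "\<beta> \<notin> X" and ab: "\<alpha> \<noteq> \<beta>"
    and Xa: "insert \<alpha> (X - {i}) \<in> F" and Xb: "insert \<beta> X \<in> F" and Yb: "insert i Y - {\<beta>} \<in> F"
  shows "exchangeable F X Y i"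
proof -
  have e: "exchangeable F (insert \<beta> X) Y i"
    by (rule exchangeable_avoiding[where e=\<beta>]) (use YF Xb iX iY aY bY in auto)
  have q: "insert \<beta> X - {i} = insert \<beta> (X - {i})" "Y - insert \<beta> X = Y - X - {\<beta>}"
    using iX bY by auto
  from e have c: "(insert \<beta> (X - {i}) \<in> F \<and> insert i Y \<in> F) \<or>
      (\<exists>k\<in>Y - X - {\<beta>}. insert k (insert \<beta> (X - {i})) \<in> F \<and> insert i Y - {k} \<in> F)"
    unfolding exchangeable_def q .
  show ?thesis
  proof (cases "insert \<beta> (X - {i}) \<in> F \<and> insert i Y \<in> F")
    case True then show ?thesis using exchange_by_swap bY Yb by blast
  next
    case False
    then obtain k where k: "k \<in> Y" "k \<notin> X" "k \<noteq> \<beta>" "insert k (insert \<beta> (X - {i})) \<in> F" "insert i Y - {k} \<in> F"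
      using c by auto
    show ?thesis
    proof (cases "k = \<alpha>")
      case True then show ?thesis using k Xa exchange_by_swap by blast
    next
      case ka: False
      have "exchangeable F (insert k (insert \<beta> (X - {i}))) (insert \<alpha> (X - {i})) k"
        by (rule exchangeable_within_diff) (use k ka ab Xa iX iY aY bY in auto)
      then have "(insert \<beta> (X - {i}) \<in> F \<and> insert k (insert \<alpha> (X - {i})) \<in> F) \<or>
          (insert \<alpha> (insert \<beta> (X - {i})) \<in> F \<and> insert k (X - {i}) \<in> F)"
        by (rule exchangeable_singleD) (use k ka ab iX iY aY bY in auto)
      then show ?thesis using k Yb bY exchange_by_swap by blast
    qed
  qed
qed

lemma exchange_from_double_swap:
  assumes uY: "u \<in> Y" "u \<notin> X" and vY: "v \<in> Y" "v \<notin> X" and uv: "u \<noteq> v"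
    and Xuv: "insert u (insert v (X - {i})) \<in> F" and Yuv: "insert i Y - {u} - {v} \<in> F"
    and e: "e \<in> X - Y" "e \<noteq> i"
  shows "exchangeable F X Y i"
proof -
  have "exchangeable F (insert u (insert v (X - {i}))) X u"
    by (rule exchangeable_avoiding[where e=e]) (use XF Xuv e iX iY uY vY uv in auto)
  then have x: "(insert v (X - {i}) \<in> F \<and> insert u X \<in> F) \<or> (insert v X \<in> F \<and> insert u (X - {i}) \<in> F)"
    by (rule exchangeable_singleD) (use iX iY uY vY uv in auto)
  have "exchangeable F Y (insert i Y - {u} - {v}) u"
    by (rule exchangeable_avoiding[where e=e]) (use YF Yuv e iX iY uY vY uv in auto)
  then have y: "(Y - {u} \<in> F \<and> insert i Y - {v} \<in> F) \<or> (insert i Y - {u} \<in> F \<and> Y - {v} \<in> F)"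
    by (rule exchangeable_singleD) (use iX iY uY vY uv in auto)
  from x y consider
      (swap_v) "insert v (X - {i}) \<in> F" "insert i Y - {v} \<in> F"
    | (swap_u) "insert u (X - {i}) \<in> F" "insert i Y - {u} \<in> F"
    | (insert_u) "insert v (X - {i}) \<in> F" "insert u X \<in> F" "insert i Y - {u} \<in> F"
    | (insert_v) "insert u (X - {i}) \<in> F" "insert v X \<in> F" "insert i Y - {v} \<in> F"
    by blast
  then show ?thesis
  proof cases
    case swap_v
    with vY show ?thesis by (intro exchange_by_swap)
  next
    case swap_u
    with uY show ?thesis by (intro exchange_by_swap)
  next
    case insert_u
    with uY vY uv show ?thesis by (intro exchange_from_insertions[of v u]) auto
  next
    case insert_v
    with uY vY uv show ?thesis by (intro exchange_from_insertions[of u v]) auto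
  qed
qed

lemma exchange_from_multiple_swap:
  assumes J: "J \<subseteq> Y - X" and XJ: "(X - {i}) \<union> J \<in> F" and YJ: "insert i Y - J \<in> F"
    and e: "e \<in> X - Y" "e \<noteq> i"
  shows "exchangeable F X Y i"
proof -
  have e1: "exchangeable F X ((X - {i}) \<union> J) i"
    by (rule exchangeable_avoiding[where e=e]) (use XF XJ e iX iY J in auto)
  have e2: "exchangeable F (insert i Y - J) Y i"
    by (rule exchangeable_avoiding[where e=e]) (use YF YJ e iX iY J in auto)
  have q: "insert i ((X - {i}) \<union> J) = X \<union> J" "(X - {i}) \<union> J - X = J"
     "insert i Y - J - {i} = Y - J" "Y - (insert i Y - J) = J"
    using iX iY J by auto
  from e1 have c1: "(X - {i} \<in> F \<and> X \<union> J \<in> F) \<or>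
      (\<exists>j\<in>J. insert j (X - {i}) \<in> F \<and> X \<union> J - {j} \<in> F)"
    unfolding exchangeable_def q .
  from e2 have c2: "(Y - J \<in> F \<and> insert i Y \<in> F) \<or>
      (\<exists>k\<in>J. insert k (Y - J) \<in> F \<and> insert i Y - {k} \<in> F)"
    unfolding exchangeable_def q .
  show ?thesis
  proof (cases "X - {i} \<in> F \<and> X \<union> J \<in> F")
    case removal: True
    show ?thesis
    proof (cases "Y - J \<in> F \<and> insert i Y \<in> F")
      case True then show ?thesis using removal exchange_by_removal by blast
    next
      case False
      then obtain k where k: "k \<in> J" "insert k (Y - J) \<in> F" "insert i Y - {k} \<in> F" using c2 by auto
      have "exchangeable F (X \<union> J) (X - {i}) k"
        by (rule exchangeable_avoiding[where e=e]) (use removal k e iX iY J in auto)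
      then have "X \<union> J - {k} \<in> F \<and> insert k (X - {i}) \<in> F"
        by (rule exchangeable_subsetD) auto
      then show ?thesis using k J exchange_by_swap by blast
    qed
  next
    case False
    then obtain j where j: "j \<in> J" "insert j (X - {i}) \<in> F" "X \<union> J - {j} \<in> F" using c1 by auto
    show ?thesis
    proof (cases "Y - J \<in> F \<and> insert i Y \<in> F")
      case removal: True
      have "exchangeable F (insert i Y) (Y - J) j"
        by (rule exchangeable_avoiding[where e=e]) (use removal j e iX iY J in auto)
      then have "insert i Y - {j} \<in> F \<and> insert j (Y - J) \<in> F"
        by (rule exchangeable_subsetD) auto
      then show ?thesis using j J exchange_by_swap by blast
    next
      case False
      then obtain k where k: "k \<in> J" "insert k (Y - J) \<in> F" "insert i Y - {k} \<in> F" using c2 by auto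
      show ?thesis
      proof (cases "j = k")
        case True then show ?thesis using j k J exchange_by_swap by blast
      next
        case jk: False
        have "exchangeable F (X \<union> J - {j}) (insert j (X - {i})) k"
          by (rule exchangeable_avoiding[where e=e]) (use j k jk e iX iY J in auto)
        then have x: "(X \<union> J - {j} - {k} \<in> F \<and> insert k (insert j (X - {i})) \<in> F) \<or>
            (X \<union> J - {k} \<in> F \<and> insert k (X - {i}) \<in> F)"
          by (rule exchangeable_singleD) (use j k jk iX iY J in auto)
        have "exchangeable F (insert i Y - {k}) (insert k (Y - J)) j"
          by (rule exchangeable_avoiding[where e=e]) (use j k jk e iX iY J in auto)
        then have y: "(insert i Y - {k} - {j} \<in> F \<and> insert j (insert k (Y - J)) \<in> F) \<or>
            (insert i Y - {j} \<in> F \<and> insert j (Y - J) \<in> F)"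
          by (rule exchangeable_singleD) (use j k jk iX iY J in auto)
        from x y consider "insert k (X - {i}) \<in> F" | "insert i Y - {j} \<in> F"
          | "insert k (insert j (X - {i})) \<in> F" "insert i Y - {k} - {j} \<in> F"
          by blast
        then show ?thesis
        proof cases
          case 1
          with k J show ?thesis by (intro exchange_by_swap) auto
        next
          case 2
          with j J show ?thesis by (intro exchange_by_swap) auto
        next
          case 3
          with j k jk J e show ?thesis by (intro exchange_from_double_swap[of k j e]) auto
        qed
      qed
    qed
  qed
qed

lemma exchange_if_diff_singleton:
  assumes m: "bnat_exc_m F" and XY: "X - Y = {i}"
  shows "exchangeable F X Y i"
proof (cases "Y - X = {}")
  case True
  then have "Y = X - {i}" using XY by blast
  then have "X - {i} \<in> F" "insert i Y \<in> F" using XF YF iX by (simp_all add: insert_absorb)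
  then show ?thesis by (rule exchange_by_removal)
next
  case False
  then obtain u where u: "u \<in> Y" "u \<notin> X" by blast
  then have "{u} \<subseteq> Y - X" by blast
  then obtain K where "K \<subseteq> X - Y" and K: "(Y - {u}) \<union> K \<in> F" "(X - K) \<union> {u} \<in> F"
    by (rule bnat_exc_mE[OF m YF XF])
  then have "K = {} \<or> K = {i}" using XY by (simp add: subset_singleton_iff)
  then show ?thesis
  proof
    assume "K = {}"
    then have "Y - {u} \<in> F" "insert u X \<in> F" using K by simp_all
    then show ?thesis using u by (intro exchange_from_transfer)
  next
    assume "K = {i}"
    then have "insert u (X - {i}) \<in> F" "insert i Y - {u} \<in> F"
      using K u iX by (auto simp: insert_Diff_if)
    then show ?thesis using u by (intro exchange_by_swap)
  qed
qed

lemma exchange_from_bnat_exc_m: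
  assumes m: "bnat_exc_m F"
  shows "exchangeable F X Y i"
proof (cases "X - Y = {i}")
  case True
  with m show ?thesis by (rule exchange_if_diff_singleton)
next
  case False
  then obtain e where e: "e \<in> X - Y" "e \<noteq> i" using iX iY by blast
  have "{i} \<subseteq> X - Y" using iX iY by blast
  then obtain J where J: "J \<subseteq> Y - X" "(X - {i}) \<union> J \<in> F" "(Y - J) \<union> {i} \<in> F"
    by (rule bnat_exc_mE[OF m XF YF])
  have "(Y - J) \<union> {i} = insert i Y - J" using J(1) iX by blast
  with J have "insert i Y - J \<in> F" by simp
  with J(1,2) show ?thesis using e by (rule exchange_from_multiple_swap)
qed

end

lemma bnat_exc_m_exchangeable:
  assumes N: "finite N" "F \<subseteq> Pow N" and m: "bnat_exc_m F"
  shows "X \<in> F \<Longrightarrow> Y \<in> F \<Longrightarrow> i \<in> X \<Longrightarrow> i \<notin> Y \<Longrightarrow> exchangeable F X Y i"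
proof (induction "card (sym_diff X Y)" arbitrary: X Y i rule: less_induct)
  case less
  have "finite X" "finite Y" using less.prems N by (auto intro: finite_subset)
  then have "finite (sym_diff X Y)" by simp
  then have "\<And>A B a. A \<in> F \<Longrightarrow> B \<in> F \<Longrightarrow> a \<in> A \<Longrightarrow> a \<notin> B \<Longrightarrow>
      sym_diff A B \<subset> sym_diff X Y \<Longrightarrow> exchangeable F A B a"
    using less.hyps psubset_card_mono[OF \<open>finite (sym_diff X Y)\<close>] by blast
  then show ?case by (rule exchange_from_bnat_exc_m[OF less.prems _ m])
qed

theorem proposition3:
  fixes N :: "'a set" and F :: "'a set set"
  assumes "finite N" and "F \<subseteq> Pow N" and "bnat_exc_m F"
  shows "bnat_exc F"
  unfolding bnat_exc_iff_exchangeable using bnat_exc_m_exchangeable[OF assms] by blast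

end
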